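(* For every $i\in\{1,\dots,n\}$, in ${\mathcal U}_D^{\ge0}\otimes{\mathcal U}_D^{\ge0}$, $$\Delta(x_i)=K_{-\deg(x_i)}\otimes x_i+x_i\otimes1+\hat q\sum_{j=i+1}^nE_{j\downarrow i+1}K_{-\deg(x_j)}\otimes x_j,$$ $$\Delta(y_i)=K_{-\deg(y_i)}\otimes y_i+y_i\otimes1+\hat q\Big(\sum_{j=1}^n\epsilon_{ij}K_{-\deg(x_j)}\otimes x_j+\sum_{j=1}^{i-1}E_{j+1\uparrow i}K_{-\deg(y_j)}\otimes y_j\Big).$$
   Context: Let $k$ be an algebraically closed field of characteristic $0$ and $q\in k^\times$ not a root of unity; $\hat q=q-q^{-1}$; $n\ge3$. Let $Q(D_{n+1})$ be the lattice of $(a_1,\dots,a_{n+1})\in\mathbb Z^{n+1}$ with even coordinate sum, standard inner product, simple roots $\alpha_1=e_1+e_2$, $\alpha_i=e_i-e_{i-1}$ ($2\le i\le n+1$), reflections $s_i$. Write $[u,v]=uv-q^{-1}vu$. ${\mathcal U}_q(\mathfrak{so}_{2n+2})$ is generated by $E_i,F_i,K_\mu$ with the standard relations ($K_0=1$, $K_\mu K_\lambda=K_{\mu+\lambda}$, $K_\mu E_iK_{-\mu}=q^{\langle\mu,\alpha_i\rangle}E_i$, $K_\mu F_iK_{-\mu}=q^{-\langle\mu,\alpha_i\rangle}F_i$, $E_iE_j=E_jE_i$ if $\langle\alpha_i,\alpha_j\rangle\in\{0,2\}$, $E_i[E_i,E_j]=q[E_i,E_j]E_i$ if $\langle\alpha_i,\alpha_j\rangle=-1$,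 same for $F$'s, $E_iF_j-F_jE_i=\delta_{ij}(K_{\alpha_i}-K_{-\alpha_i})/\hat q$), Hopf structure $\Delta(E_i)=K_{-\alpha_i}\otimes E_i+E_i\otimes1$, $\Delta(K_\mu)=K_\mu\otimes K_\mu$, and Lusztig automorphisms $T_i$ ($T_iK_\mu=K_{s_i\mu}$, $T_iE_i=-F_iK_{\alpha_i}$, $T_iE_j=E_j$ if $\langle\alpha_i,\alpha_j\rangle=0$, $T_iE_j=E_iE_j-q^{-1}E_jE_i$ if $\langle\alpha_i,\alpha_j\rangle=-1$). ${\mathcal U}_D^{\ge0}$ is the Hopf subalgebra generated by all $E_i$ and $K_\mu$. Root vectors of $w_n=(s_{n+1}\cdots s_1)(s_3\cdots s_{n+1})$ (defined via $X_{\beta_\ell}=T_{i_1}\cdots T_{i_{\ell-1}}E_{i_\ell}$ for the reduced word $s_{i_1}\cdots s_{i_{2n}}$) are $x_i=X_{e_{n+1}-e_i}$, $y_i=X_{e_{n+1}+e_i}$, with degrees $\deg(x_i)=e_{n+1}-e_i$, $\deg(y_i)=e_{n+1}+e_i$; they satisfy $x_n=E_{n+1}$, $x_i=[x_{i+1},E_{i+1}]$, $y_1=[x_2,E_1]$, $y_{i+1}=[y_i,E_{i+1}]$. For $r\ge s$ in $\{1,\dots,n+1\}$ define $E_{r\downarrow r}=E_r$, $E_{r\downarrow s}=[E_{r\downarrow s+1},E_s]$ ($r\ne s$), $E_{s\uparrow s}=E_s$, $E_{s\uparrow r}=[E_{s\uparrow r-1},E_r]$ ($r\ne s$). For $i,j\in\{1,\dots,n\}$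 define $\epsilon_{11}=0$, $\epsilon_{1j}=T_jT_{j-1}\cdots T_2E_1$ ($j\ne1$), and $\epsilon_{i+1,j}=[\epsilon_{ij},E_{i+1}]$ if $j\ne i,i+1$; $\epsilon_{i+1,i+1}=q\epsilon_{i,i+1}E_{i+1}-q^{-1}E_{i+1}\epsilon_{i,i+1}$; $\epsilon_{i+1,i}=\epsilon_{i,i+1}+q^{-1}(\epsilon_{ii}E_{i+1}-E_{i+1}\epsilon_{ii})$. *)

theory Defs
  imports Main "HOL-Computational_Algebra.Polynomial"
begin

type_synonym wt = "nat \<Rightarrow> int"

definition unitv :: "nat \<Rightarrow> wt" where
  "unitv i = (\<lambda>j. if j = i then 1 else 0)"

definition wadd :: "wt \<Rightarrow> wt \<Rightarrow> wt" where
  "wadd \<mu> \<nu> = (\<lambda>j. \<mu> j + \<nu> j)"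

definition wneg :: "wt \<Rightarrow> wt" where
  "wneg \<mu> = (\<lambda>j. - \<mu> j)"

definition wzero :: wt where
  "wzero = (\<lambda>j. 0)"

text \<open>The lattice Q(D_{n+1}): integer vectors indexed by 1..n+1 (zero outside) with even coordinate sum.\<close>
definition QD :: "nat \<Rightarrow> wt set" where
  "QD n = {\<mu>. (\<forall>j. j \<notin> {1..n+1} \<longrightarrow> \<mu> j = 0) \<and> even (\<Sum>j=1..n+1. \<mu> j)}"

definition inner :: "nat \<Rightarrow> wt \<Rightarrow> wt \<Rightarrow> int" where
  "inner n \<mu> \<nu> = (\<Sum>j=1..n+1. \<mu> j * \<nu> j)"

definition alpha :: "nat \<Rightarrow> wt" where
  "alpha i = (if i = 1 then wadd (unitv 1) (unitv 2) else wadd (unitv i) (wneg (unitv (i - 1))))"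

definition refl :: "nat \<Rightarrow> nat \<Rightarrow> wt \<Rightarrow> wt" where
  "refl n i \<mu> = (\<lambda>j. \<mu> j - inner n \<mu> (alpha i) * alpha i j)"

text \<open>A k-algebra is modelled as a ring 'a together with a central unital ring homomorphism sc : 'k -> 'a
  (scalar c acts as multiplication by sc c).\<close>
definition kalg :: "('k::field \<Rightarrow> 'a::ring_1) \<Rightarrow> bool" where
  "kalg sc \<longleftrightarrow> (\<forall>a b. sc (a + b) = sc a + sc b) \<and> (\<forall>a b. sc (a * b) = sc a * sc b) \<and> sc 1 = 1
      \<and> (\<forall>c x. sc c * x = x * sc c)"

definition kalg_hom :: "('k::field \<Rightarrow> 'a::ring_1) \<Rightarrow> ('k \<Rightarrow> 'b::ring_1) \<Rightarrow> ('a \<Rightarrow> 'b) \<Rightarrow> bool" where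
  "kalg_hom sa sb f \<longleftrightarrow> (\<forall>x y. f (x + y) = f x + f y) \<and> (\<forall>x y. f (x * y) = f x * f y) \<and> f 1 = 1
      \<and> (\<forall>c. f (sa c) = sb c)"

definition br :: "('k::field \<Rightarrow> 'a::ring_1) \<Rightarrow> 'k \<Rightarrow> 'a \<Rightarrow> 'a \<Rightarrow> 'a" where
  "br sc q u v = u * v - sc (inverse q) * (v * u)"

definition qhat :: "'k::field \<Rightarrow> 'k" where
  "qhat q = q - inverse q"

definition Uq_rels :: "nat \<Rightarrow> 'k::field \<Rightarrow> ('k \<Rightarrow> 'a::ring_1) \<Rightarrow> (nat \<Rightarrow> 'a) \<Rightarrow> (nat \<Rightarrow> 'a)
    \<Rightarrow> (wt \<Rightarrow> 'a) \<Rightarrow> bool" where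
  "Uq_rels n q sc E F K \<longleftrightarrow>
     K wzero = 1
   \<and> (\<forall>\<mu>\<in>QD n. \<forall>\<nu>\<in>QD n. K \<mu> * K \<nu> = K (wadd \<mu> \<nu>))
   \<and> (\<forall>\<mu>\<in>QD n. \<forall>i\<in>{1..n+1}. K \<mu> * E i * K (wneg \<mu>) = sc (q powi inner n \<mu> (alpha i)) * E i)
   \<and> (\<forall>\<mu>\<in>QD n. \<forall>i\<in>{1..n+1}. K \<mu> * F i * K (wneg \<mu>) = sc (q powi (- inner n \<mu> (alpha i))) * F i)
   \<and> (\<forall>i\<in>{1..n+1}. \<forall>j\<in>{1..n+1}. inner n (alpha i) (alpha j) \<in> {0, 2} \<longrightarrow>
        E i * E j = E j * E i \<and> F i * F j = F j * F i)
   \<and> (\<forall>i\<in>{1..n+1}. \<forall>j\<in>{1..n+1}. inner n (alpha i) (alpha j) = -1 \<longrightarrow>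
        E i * br sc q (E i) (E j) = sc q * br sc q (E i) (E j) * E i
      \<and> F i * br sc q (F i) (F j) = sc q * br sc q (F i) (F j) * F i)
   \<and> (\<forall>i\<in>{1..n+1}. \<forall>j\<in>{1..n+1}. E i * F j - F j * E i =
        (if i = j then sc (inverse (qhat q)) * (K (alpha i) - K (wneg (alpha i))) else 0))"

definition lusztig :: "nat \<Rightarrow> 'k::field \<Rightarrow> ('k \<Rightarrow> 'a::ring_1) \<Rightarrow> (nat \<Rightarrow> 'a) \<Rightarrow> (nat \<Rightarrow> 'a)
    \<Rightarrow> (wt \<Rightarrow> 'a) \<Rightarrow> (nat \<Rightarrow> 'a \<Rightarrow> 'a) \<Rightarrow> bool" where
  "lusztig n q sc E F K T \<longleftrightarrow>
     (\<forall>i\<in>{1..n+1}. kalg_hom sc sc (T i) \<and> bij (T i)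
       \<and> (\<forall>\<mu>\<in>QD n. T i (K \<mu>) = K (refl n i \<mu>))
       \<and> T i (E i) = - (F i * K (alpha i))
       \<and> (\<forall>j\<in>{1..n+1}. inner n (alpha i) (alpha j) = 0 \<longrightarrow> T i (E j) = E j)
       \<and> (\<forall>j\<in>{1..n+1}. inner n (alpha i) (alpha j) = -1 \<longrightarrow>
             T i (E j) = E i * E j - sc (inverse q) * (E j * E i)))"

text \<open>Tensor square: a k-algebra 'c with two k-algebra maps i1, i2 : 'a -> 'c whose images commute;
  a (x) b is rendered as i1 a * i2 b.\<close>
definition tensor_data :: "('k::field \<Rightarrow> 'a::ring_1) \<Rightarrow> ('k \<Rightarrow> 'c::ring_1) \<Rightarrow> ('a \<Rightarrow> 'c) \<Rightarrow> ('a \<Rightarrow> 'c) \<Rightarrow> bool" where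
  "tensor_data sa sc i1 i2 \<longleftrightarrow> kalg_hom sa sc i1 \<and> kalg_hom sa sc i2 \<and> (\<forall>a b. i1 a * i2 b = i2 b * i1 a)"

definition tens :: "('a \<Rightarrow> 'c::ring_1) \<Rightarrow> ('a \<Rightarrow> 'c) \<Rightarrow> 'a \<Rightarrow> 'a \<Rightarrow> 'c" where
  "tens i1 i2 a b = i1 a * i2 b"

definition coprod :: "nat \<Rightarrow> ('k::field \<Rightarrow> 'a::ring_1) \<Rightarrow> ('k \<Rightarrow> 'c::ring_1) \<Rightarrow> (nat \<Rightarrow> 'a) \<Rightarrow> (wt \<Rightarrow> 'a)
    \<Rightarrow> ('a \<Rightarrow> 'c) \<Rightarrow> ('a \<Rightarrow> 'c) \<Rightarrow> ('a \<Rightarrow> 'c) \<Rightarrow> bool" where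
  "coprod n sa sc E K i1 i2 \<Delta> \<longleftrightarrow> kalg_hom sa sc \<Delta>
     \<and> (\<forall>\<mu>\<in>QD n. \<Delta> (K \<mu>) = tens i1 i2 (K \<mu>) (K \<mu>))
     \<and> (\<forall>i\<in>{1..n+1}. \<Delta> (E i) = tens i1 i2 (K (wneg (alpha i))) (E i) + tens i1 i2 (E i) 1)"

text \<open>xr m = x_{n-m}: x_n = E_{n+1}, x_i = [x_{i+1}, E_{i+1}].\<close>
fun xr :: "('k::field \<Rightarrow> 'a::ring_1) \<Rightarrow> 'k \<Rightarrow> (nat \<Rightarrow> 'a) \<Rightarrow> nat \<Rightarrow> nat \<Rightarrow> 'a" where
  "xr sc q E n 0 = E (n + 1)"
| "xr sc q E n (Suc m) = br sc q (xr sc q E n m) (E (n - m))"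

definition xv :: "('k::field \<Rightarrow> 'a::ring_1) \<Rightarrow> 'k \<Rightarrow> (nat \<Rightarrow> 'a) \<Rightarrow> nat \<Rightarrow> nat \<Rightarrow> 'a" where
  "xv sc q E n i = xr sc q E n (n - i)"

fun yv :: "('k::field \<Rightarrow> 'a::ring_1) \<Rightarrow> 'k \<Rightarrow> (nat \<Rightarrow> 'a) \<Rightarrow> nat \<Rightarrow> nat \<Rightarrow> 'a" where
  "yv sc q E n 0 = 0"
| "yv sc q E n (Suc 0) = br sc q (xv sc q E n 2) (E 1)"
| "yv sc q E n (Suc (Suc i)) = br sc q (yv sc q E n (Suc i)) (E (Suc (Suc i)))"

definition degx :: "nat \<Rightarrow> nat \<Rightarrow> wt" where
  "degx n i = wadd (unitv (n + 1)) (wneg (unitv i))"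

definition degy :: "nat \<Rightarrow> nat \<Rightarrow> wt" where
  "degy n i = wadd (unitv (n + 1)) (unitv i)"

text \<open>Edn r d = E_{r \<down> r-d}; Edown r s = E_{r \<down> s} for r >= s.\<close>
fun Edn :: "('k::field \<Rightarrow> 'a::ring_1) \<Rightarrow> 'k \<Rightarrow> (nat \<Rightarrow> 'a) \<Rightarrow> nat \<Rightarrow> nat \<Rightarrow> 'a" where
  "Edn sc q E r 0 = E r"
| "Edn sc q E r (Suc d) = br sc q (Edn sc q E r d) (E (r - Suc d))"

definition Edown :: "('k::field \<Rightarrow> 'a::ring_1) \<Rightarrow> 'k \<Rightarrow> (nat \<Rightarrow> 'a) \<Rightarrow> nat \<Rightarrow> nat \<Rightarrow> 'a" where
  "Edown sc q E r s = Edn sc q E r (r - s)"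

text \<open>Eupd s d = E_{s \<up> s+d}; Eup s r = E_{s \<up> r} for r >= s.\<close>
fun Eupd :: "('k::field \<Rightarrow> 'a::ring_1) \<Rightarrow> 'k \<Rightarrow> (nat \<Rightarrow> 'a) \<Rightarrow> nat \<Rightarrow> nat \<Rightarrow> 'a" where
  "Eupd sc q E s 0 = E s"
| "Eupd sc q E s (Suc d) = br sc q (Eupd sc q E s d) (E (s + Suc d))"

definition Eup :: "('k::field \<Rightarrow> 'a::ring_1) \<Rightarrow> 'k \<Rightarrow> (nat \<Rightarrow> 'a) \<Rightarrow> nat \<Rightarrow> nat \<Rightarrow> 'a" where
  "Eup sc q E s r = Eupd sc q E s (r - s)"

fun Tch :: "(nat \<Rightarrow> 'a \<Rightarrow> 'a) \<Rightarrow> nat \<Rightarrow> 'a \<Rightarrow> 'a" where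
  "Tch T 0 a = a"
| "Tch T (Suc 0) a = a"
| "Tch T (Suc (Suc m)) a = T (Suc (Suc m)) (Tch T (Suc m) a)"

fun eps :: "('k::field \<Rightarrow> 'a::ring_1) \<Rightarrow> 'k \<Rightarrow> (nat \<Rightarrow> 'a) \<Rightarrow> (nat \<Rightarrow> 'a \<Rightarrow> 'a) \<Rightarrow> nat \<Rightarrow> nat \<Rightarrow> 'a" where
  "eps sc q E T 0 j = 0"
| "eps sc q E T (Suc 0) j = (if j = 1 then 0 else Tch T j (E 1))"
| "eps sc q E T (Suc (Suc i)) j =
     (if j = Suc (Suc i) then
        sc q * eps sc q E T (Suc i) (Suc (Suc i)) * E (Suc (Suc i))
        - sc (inverse q) * (E (Suc (Suc i)) * eps sc q E T (Suc i) (Suc (Suc i)))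
      else if j = Suc i then
        eps sc q E T (Suc i) (Suc (Suc i))
        + sc (inverse q) * (eps sc q E T (Suc i) (Suc i) * E (Suc (Suc i))
                            - E (Suc (Suc i)) * eps sc q E T (Suc i) (Suc i))
      else br sc q (eps sc q E T (Suc i) j) (E (Suc (Suc i))))"

definition alg_closed :: "'k::field itself \<Rightarrow> bool" where
  "alg_closed _ \<longleftrightarrow> (\<forall>p :: 'k poly. degree p \<ge> 1 \<longrightarrow> (\<exists>z. poly p z = 0))"

end

theory Submission
  imports Defs
begin

(* The coproduct D is an algebra map, so D[u, E_m] = [D u, D E_m], the outer bracket being the
   q-commutator of the tensor algebra.  For a pure tensor A (x) B with
   K_{-alpha_m} A = q^k A K_{-alpha_m} one computes (bracket_term)
     [A (x) B, D E_m] = [A, E_m] (x) B + A K_{-alpha_m} (x) (B E_m - q^{k-1} E_m B),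
   so only the left factor is bracketed when k = 1 and B commutes with E_m
   (bracket_term_commuting).  Applied to the two leading terms of D u this gives, for u
   homogeneous of degree a with <a, alpha_m> = -1, the master formula coprod_bracket_root:
     D u = K_{-a} (x) u + u (x) 1 + R   implies
     D [u, E_m] = K_{-a-alpha_m} (x) [u, E_m] + [u, E_m] (x) 1 + qhat E_m K_{-a} (x) u + [R, D E_m].  The formula for
   D x_i follows by downward induction along x_i = [x_{i+1}, E_{i+1}], that for D y_i by upward
   induction along y_{i+1} = [y_i, E_{i+1}] starting at y_1 = [x_2, E_1]; in the bracket
   [R, D E_m] every term is generic except the pair j = i, i+1 of the epsilon-sum, whose two
   brackets only add up to the required terms. *)

lemma sum_cong_except_pair:
  fixes h g :: "'i \<Rightarrow> 'b::comm_monoid_add"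
  assumes "finite A" "a \<in> A" "b \<in> A" "a \<noteq> b"
    and outside: "\<And>j. j \<in> A \<Longrightarrow> j \<noteq> a \<Longrightarrow> j \<noteq> b \<Longrightarrow> h j = g j"
    and pair: "h a + h b = g a + g b"
  shows "sum h A = sum g A"
proof -
  have split: "sum f A = f a + f b + sum f (A - {a} - {b})" for f :: "'i \<Rightarrow> 'b"
    using assms(1-4) by (simp add: sum.remove[of A a] sum.remove[of "A - {a}" b] add.assoc)
  have "sum h (A - {a} - {b}) = sum g (A - {a} - {b})" using outside by (intro sum.cong) auto
  then show ?thesis unfolding split[of h] split[of g] pair by simp
qed

lemma inner_wadd_l: "inner n (wadd a b) c = inner n a c + inner n b c"
  by (simp add: inner_def wadd_def sum.distrib distrib_right)
lemma inner_wadd_r: "inner n c (wadd a b) = inner n c a + inner n c b"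
  by (simp add: inner_def wadd_def sum.distrib distrib_left)
lemma inner_wneg_l: "inner n (wneg a) c = - inner n a c"
  by (simp add: inner_def wneg_def sum_negf)
lemma inner_wneg_r: "inner n c (wneg a) = - inner n c a"
  by (simp add: inner_def wneg_def sum_negf)
lemma inner_unitv: "inner n (unitv a) (unitv b) = (if a = b \<and> 1 \<le> a \<and> a \<le> n+1 then 1 else 0)"
proof -
  have "\<And>j. unitv a j * unitv b j = (if j = a then (if a = b then 1 else 0) else 0)"
    by (simp add: unitv_def)
  then show ?thesis by (simp add: inner_def)
qed

lemmas inner_simps = inner_wadd_l inner_wadd_r inner_wneg_l inner_wneg_r inner_unitv

lemma inner_sym: "inner n a b = inner n b a"
  by (simp add: inner_def mult.commute)

lemma wadd_comm: "wadd a b = wadd b a"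
  by (simp add: wadd_def fun_eq_iff add.commute)

lemma wadd_wneg: "wadd (wneg a) (wneg b) = wneg (wadd a b)"
  by (simp add: fun_eq_iff wadd_def wneg_def)

lemma QD_wneg: "a \<in> QD n \<Longrightarrow> wneg a \<in> QD n"
  by (auto simp: QD_def wneg_def sum_negf)

lemma QD_unit_sum: "a \<in> {1..n+1} \<Longrightarrow> b \<in> {1..n+1} \<Longrightarrow> wadd (unitv a) (unitv b) \<in> QD n"
  by (auto simp: QD_def wadd_def unitv_def sum.distrib)

lemma QD_unit_diff:
  assumes a: "a \<in> {1..n+1}" and b: "b \<in> {1..n+1}"
  shows "wadd (unitv a) (wneg (unitv b)) \<in> QD n"
proof -
  have "(\<Sum>j=1..n+1. wadd (unitv a) (wneg (unitv b)) j)
      = (\<Sum>j=1..n+1. unitv a j) - (\<Sum>j=1..n+1. unitv b j)"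
    by (simp add: wadd_def wneg_def sum_subtractf[symmetric])
  also have "\<dots> = 0" using a b by (simp add: unitv_def)
  finally have "even (\<Sum>j=1..n+1. wadd (unitv a) (wneg (unitv b)) j)" by simp
  then show ?thesis using a b by (auto simp: QD_def wadd_def wneg_def unitv_def)
qed

lemma QD_alpha: assumes "1 \<le> n" "m \<in> {1..n+1}" shows "alpha m \<in> QD n"
proof (cases "m = 1")
  case True
  then show ?thesis using assms unfolding alpha_def by (simp add: QD_unit_sum)
next
  case False
  then have "m - 1 \<in> {1..n+1}" using assms by auto
  then show ?thesis using False assms unfolding alpha_def by (simp only: if_False QD_unit_diff)
qed

lemma QD_degx: "j \<in> {1..n+1} \<Longrightarrow> degx n j \<in> QD n"
  unfolding degx_def by (rule QD_unit_diff) auto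

lemma QD_degy: "j \<in> {1..n+1} \<Longrightarrow> degy n j \<in> QD n"
  unfolding degy_def by (rule QD_unit_sum) auto

lemma alpha_top: "1 \<le> n \<Longrightarrow> alpha (Suc n) = degx n n"
  by (auto simp: fun_eq_iff degx_def alpha_def wadd_def wneg_def unitv_def)

lemma degx_step: "1 \<le> i \<Longrightarrow> wadd (degx n (Suc i)) (alpha (Suc i)) = degx n i"
  by (auto simp: fun_eq_iff degx_def alpha_def wadd_def wneg_def unitv_def)

lemma degy_one: "wadd (degx n 2) (alpha 1) = degy n 1"
  by (auto simp: fun_eq_iff wadd_def wneg_def unitv_def alpha_def degx_def degy_def)

lemma degy_step: "1 \<le> i \<Longrightarrow> wadd (degy n i) (alpha (Suc i)) = degy n (Suc i)"
  by (auto simp: fun_eq_iff wadd_def wneg_def unitv_def alpha_def degy_def)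

lemma inner_alpha_far: "2 \<le> a \<Longrightarrow> a + 1 < b \<Longrightarrow> b \<le> n + 1 \<Longrightarrow> inner n (alpha a) (alpha b) = 0"
  by (simp add: inner_simps alpha_def) arith

text \<open>The hypotheses of Lemma 3.3, with D the coproduct and i1 a * i2 b standing for a (x) b.
  That q is not a root of unity is only used to invert q + q^-1.\<close>

locale Uq_coproduct =
  fixes n :: nat and q :: "'k::field_char_0" and sa :: "'k \<Rightarrow> 'a::ring_1"
    and E F :: "nat \<Rightarrow> 'a" and K :: "wt \<Rightarrow> 'a" and T :: "nat \<Rightarrow> 'a \<Rightarrow> 'a"
    and sc :: "'k \<Rightarrow> 'c::ring_1" and i1 i2 D :: "'a \<Rightarrow> 'c"
  assumes q0: "q \<noteq> 0" and q_not_root: "\<forall>m::nat. m > 0 \<longrightarrow> q ^ m \<noteq> 1" and n3: "n \<ge> 3"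
    and kalg_sa: "kalg sa" and kalg_sc: "kalg sc" and rels: "Uq_rels n q sa E F K"
    and lus: "lusztig n q sa E F K T" and tensor: "tensor_data sa sc i1 i2"
    and coprod: "coprod n sa sc E K i1 i2 D"
begin

abbreviation "Q \<equiv> sa q"
abbreviation "P \<equiv> sa (inverse q)"
abbreviation "bra \<equiv> br sa q"
abbreviation "brc \<equiv> br sc q"

lemma sa_add: "sa (a + b) = sa a + sa b" and sa_mult: "sa (a * b) = sa a * sa b"
  and sa_one: "sa 1 = 1" and sa_central: "sa c * x = x * sa c"
  using kalg_sa unfolding kalg_def by blast+
lemma sa_diff: "sa (a - b) = sa a - sa b"
  using additive.diff[OF additive.intro] sa_add by blast
lemma sc_central: "sc c * y = y * sc c"
  using kalg_sc unfolding kalg_def by blast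

lemma i1_add: "i1 (x + y) = i1 x + i1 y" and i1_mult: "i1 (x * y) = i1 x * i1 y"
  and i1_sa: "i1 (sa c) = sc c"
  and i2_add: "i2 (x + y) = i2 x + i2 y" and i2_mult: "i2 (x * y) = i2 x * i2 y"
  and i2_one: "i2 1 = 1" and i2_sa: "i2 (sa c) = sc c"
  and i1_i2_comm: "i1 x * i2 y = i2 y * i1 x"
  using tensor by (auto simp: tensor_data_def kalg_hom_def)
lemma i1_diff: "i1 (x - y) = i1 x - i1 y" and i2_diff: "i2 (x - y) = i2 x - i2 y"
  and i1_zero: "i1 0 = 0" and i2_zero: "i2 0 = 0"
  using additive.diff[OF additive.intro] additive.zero[OF additive.intro] i1_add i2_add
  by blast+

lemma D_add: "D (x + y) = D x + D y" and D_mult: "D (x * y) = D x * D y"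
  and D_sa: "D (sa c) = sc c"
  using coprod by (auto simp: coprod_def kalg_hom_def)
lemma D_diff: "D (x - y) = D x - D y"
  using additive.diff[OF additive.intro] D_add by blast
lemma D_E: "m \<in> {1..n+1} \<Longrightarrow> D (E m) = i1 (K (wneg (alpha m))) * i2 (E m) + i1 (E m)"
  using coprod by (auto simp: coprod_def tens_def i2_one)

lemma K_zero: "K wzero = 1"
  using rels unfolding Uq_rels_def by blast
lemma K_mult: "\<mu> \<in> QD n \<Longrightarrow> \<nu> \<in> QD n \<Longrightarrow> K \<mu> * K \<nu> = K (wadd \<mu> \<nu>)"
  using rels unfolding Uq_rels_def by blast
lemma K_conj_E:
  "\<mu> \<in> QD n \<Longrightarrow> m \<in> {1..n+1} \<Longrightarrow> K \<mu> * E m * K (wneg \<mu>) = sa (q powi inner n \<mu> (alpha m)) * E m"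
  using rels unfolding Uq_rels_def by blast
lemma E_comm:
  "a \<in> {1..n+1} \<Longrightarrow> b \<in> {1..n+1} \<Longrightarrow> inner n (alpha a) (alpha b) = 0 \<Longrightarrow> E a * E b = E b * E a"
  using rels unfolding Uq_rels_def by blast
lemma E_serre: "a \<in> {1..n+1} \<Longrightarrow> b \<in> {1..n+1} \<Longrightarrow> inner n (alpha a) (alpha b) = -1
   \<Longrightarrow> E a * bra (E a) (E b) = Q * bra (E a) (E b) * E a"
  using rels unfolding Uq_rels_def by blast

lemma K_E: assumes "\<mu> \<in> QD n" "m \<in> {1..n+1}"
  shows "K \<mu> * E m = sa (q powi inner n \<mu> (alpha m)) * (E m * K \<mu>)"
proof -
  have inv: "K (wneg \<mu>) * K \<mu> = 1"
    using K_mult[OF QD_wneg[OF assms(1)] assms(1)] K_zero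
    by (simp add: wadd_def wneg_def wzero_def)
  have "K \<mu> * E m = K \<mu> * E m * K (wneg \<mu>) * K \<mu>" using inv by (simp add: mult.assoc)
  also have "\<dots> = sa (q powi inner n \<mu> (alpha m)) * (E m * K \<mu>)"
    using K_conj_E[OF assms] by (simp add: mult.assoc)
  finally show ?thesis .
qed

lemma E_comm_far: "2 \<le> a \<Longrightarrow> a + 1 < b \<Longrightarrow> b \<le> n + 1 \<Longrightarrow> E a * E b = E b * E a"
  by (intro E_comm inner_alpha_far) auto

lemma E1_comm: "4 \<le> b \<Longrightarrow> b \<le> n + 1 \<Longrightarrow> E 1 * E b = E b * E 1"
  by (rule E_comm) (auto simp: inner_simps alpha_def)

lemma lusztig_at: "i \<in> {1..n+1} \<Longrightarrow> kalg_hom sa sa (T i)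
       \<and> (\<forall>j\<in>{1..n+1}. inner n (alpha i) (alpha j) = 0 \<longrightarrow> T i (E j) = E j)
       \<and> (\<forall>j\<in>{1..n+1}. inner n (alpha i) (alpha j) = -1 \<longrightarrow>
             T i (E j) = E i * E j - sa (inverse q) * (E j * E i))"
  using lus unfolding lusztig_def by blast

lemma T_add: "i \<in> {1..n+1} \<Longrightarrow> T i (x + y) = T i x + T i y"
  and T_mult: "i \<in> {1..n+1} \<Longrightarrow> T i (x * y) = T i x * T i y"
  and T_sa: "i \<in> {1..n+1} \<Longrightarrow> T i (sa c) = sa c"
  using lusztig_at unfolding kalg_hom_def by blast+
lemma T_bra: "i \<in> {1..n+1} \<Longrightarrow> T i (bra x y) = bra (T i x) (T i y)"
  using additive.diff[OF additive.intro, of "T i"] T_add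
  by (simp add: br_def T_mult T_sa)
lemma T_E_orth: "i \<in> {1..n+1} \<Longrightarrow> j \<in> {1..n+1} \<Longrightarrow> inner n (alpha i) (alpha j) = 0 \<Longrightarrow> T i (E j) = E j"
  using lusztig_at by blast
lemma T_E_adj: "i \<in> {1..n+1} \<Longrightarrow> j \<in> {1..n+1} \<Longrightarrow> inner n (alpha i) (alpha j) = -1 \<Longrightarrow> T i (E j) = bra (E i) (E j)"
  using lusztig_at unfolding br_def by blast

lemma QP: "Q * P = 1" and PQ: "P * Q = 1"
  using q0 by (simp_all flip: sa_mult add: sa_one)

lemma P_Q_cancel: "P * (Q * z) = z" "Q * (P * z) = z"
  by (simp_all add: mult.assoc[symmetric] PQ QP)

lemma sa_pull: "w * (sa c * z) = sa c * (w * z)"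
  by (metis mult.assoc sa_central)

section \<open>Homogeneous elements\<close>

definition homog :: "'a \<Rightarrow> wt \<Rightarrow> bool" where
  "homog u \<mu> \<longleftrightarrow> (\<forall>\<nu>\<in>QD n. K \<nu> * u = sa (q powi inner n \<nu> \<mu>) * (u * K \<nu>))"

lemma homog_K_comm: "homog u \<mu> \<Longrightarrow> \<nu> \<in> QD n \<Longrightarrow> inner n \<nu> \<mu> = k \<Longrightarrow> K \<nu> * u = sa (q powi k) * (u * K \<nu>)"
  by (simp add: homog_def)

lemma homog_E: "m \<in> {1..n+1} \<Longrightarrow> homog (E m) (alpha m)"
  by (simp add: homog_def K_E)

lemma homog_mult: assumes "homog u \<mu>" "homog v \<nu>" shows "homog (u * v) (wadd \<mu> \<nu>)"
  unfolding homog_def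
proof
  fix w assume w: "w \<in> QD n"
  have "K w * (u * v) = (K w * u) * v" by (simp add: mult.assoc)
  also have "\<dots> = sa (q powi inner n w \<mu>) * (u * (K w * v))"
    using assms(1) w by (simp add: homog_def mult.assoc)
  also have "\<dots> = sa (q powi inner n w \<mu>) * (u * (sa (q powi inner n w \<nu>) * (v * K w)))"
    using assms(2) w by (simp add: homog_def)
  also have "\<dots> = sa (q powi inner n w \<mu>) * sa (q powi inner n w \<nu>) * (u * v * K w)"
    by (metis mult.assoc sa_central)
  finally show "K w * (u * v) = sa (q powi inner n w (wadd \<mu> \<nu>)) * (u * v * K w)"
    using q0 by (simp add: inner_wadd_r power_int_add sa_mult)
qed

lemma homog_diff: "homog u \<mu> \<Longrightarrow> homog v \<mu> \<Longrightarrow> homog (u - v) \<mu>"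
  by (simp add: homog_def algebra_simps)
lemma homog_add: "homog u \<mu> \<Longrightarrow> homog v \<mu> \<Longrightarrow> homog (u + v) \<mu>"
  by (simp add: homog_def algebra_simps)
lemma homog_zero: "homog 0 \<mu>"
  by (simp add: homog_def)
lemma homog_scal: "homog u \<mu> \<Longrightarrow> homog (sa c * u) \<mu>"
  unfolding homog_def by (metis mult.assoc sa_central)

lemma homog_bra: "homog u \<mu> \<Longrightarrow> homog v \<nu> \<Longrightarrow> homog (bra u v) (wadd \<mu> \<nu>)"
  unfolding br_def using homog_mult[of u \<mu> v \<nu>] homog_mult[of v \<nu> u \<mu>]
  by (intro homog_diff homog_scal) (simp_all add: wadd_comm)

lemma homog_times_K: assumes "homog u \<mu>" "d \<in> QD n" shows "homog (u * K d) \<mu>"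
proof -
  have "homog (K d) wzero"
    using assms(2) by (simp add: homog_def K_mult wadd_comm inner_def wzero_def sa_one)
  then have "homog (u * K d) (wadd \<mu> wzero)" by (rule homog_mult[OF assms(1)])
  moreover have "wadd \<mu> wzero = \<mu>" by (simp add: wadd_def wzero_def)
  ultimately show ?thesis by simp
qed

section \<open>Coproduct of q-commutators with generators\<close>

lemma D_bra: "D (bra u v) = brc (D u) (D v)"
  by (simp add: br_def D_diff D_mult D_sa)

lemma brc_add: "brc (X + Y) Z = brc X Z + brc Y Z"
  by (simp add: br_def algebra_simps)

lemma brc_scaled_sum:
  "brc (sc c * (\<Sum>j\<in>S. f j)) Z = sc c * (\<Sum>j\<in>S. brc (f j) Z)"
proof -
  have "sc (inverse q) * (Z * (sc c * (\<Sum>j\<in>S. f j))) = sc c * (\<Sum>j\<in>S. sc (inverse q) * (Z * f j))"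
    by (simp add: sum_distrib_left flip: mult.assoc) (metis sc_central mult.assoc)
  then show ?thesis
    by (simp add: br_def mult.assoc sum_distrib_right sum_subtractf right_diff_distrib)
qed

lemma bracket_term:
  assumes m: "m \<in> {1..n+1}"
    and KA: "K (wneg (alpha m)) * A = sa (q powi k) * (A * K (wneg (alpha m)))"
  shows "brc (i1 A * i2 B) (D (E m))
    = i1 (A * K (wneg (alpha m))) * i2 (B * E m - P * sa (q powi k) * (E m * B)) + i1 (bra A (E m)) * i2 B"
proof -
  define Ka where "Ka = K (wneg (alpha m))"
  have DE: "D (E m) = i1 Ka * i2 (E m) + i1 (E m)" using D_E[OF m] by (simp add: Ka_def)
  have right: "i1 A * i2 B * D (E m) = i1 (A * Ka) * i2 (B * E m) + i1 (A * E m) * i2 B"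
    unfolding DE by (simp add: distrib_left i1_mult i2_mult mult.assoc) (metis i1_i2_comm mult.assoc)
  have left: "D (E m) * (i1 A * i2 B) = i1 (Ka * A) * i2 (E m * B) + i1 (E m * A) * i2 B"
    unfolding DE by (simp add: distrib_right i1_mult i2_mult mult.assoc) (metis i1_i2_comm mult.assoc)
  have KA': "i1 (Ka * A) = sc (q powi k) * i1 (A * Ka)"
    using KA by (simp add: Ka_def i1_mult i1_sa)
  have left1: "sc (inverse q) * (i1 (Ka * A) * i2 (E m * B))
      = i1 (A * Ka) * i2 (P * sa (q powi k) * (E m * B))"
    unfolding KA' by (simp add: i2_mult i2_sa mult.assoc) (metis sc_central mult.assoc)
  have left2: "sc (inverse q) * (i1 (E m * A) * i2 B) = i1 (P * (E m * A)) * i2 B"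
    by (simp add: i1_mult i1_sa mult.assoc)
  show ?thesis
    unfolding br_def right left distrib_left left1 left2
    by (simp add: br_def i1_diff i2_diff algebra_simps Ka_def)
qed

lemma bracket_term_commuting:
  assumes m: "m \<in> {1..n+1}" and C: "homog C \<mu>" and d: "d \<in> QD n"
    and adj: "inner n (alpha m) \<mu> = -1" and orth: "inner n d (alpha m) = 0"
    and B: "B * E m = E m * B"
  shows "brc (i1 (C * K d) * i2 B) (D (E m)) = i1 (bra C (E m) * K d) * i2 B"
proof -
  have KA: "K (wneg (alpha m)) * (C * K d) = sa (q powi 1) * (C * K d * K (wneg (alpha m)))"
    using homog_K_comm[OF homog_times_K[OF C d] QD_wneg[OF QD_alpha[OF _ m]]] adj n3
    by (simp add: inner_wneg_l)
  have KE: "K d * E m = E m * K d" using K_E[OF d m] orth by (simp add: sa_one)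
  have "bra (C * K d) (E m) = bra C (E m) * K d"
    unfolding br_def by (simp add: algebra_simps mult.assoc KE)
  then show ?thesis unfolding bracket_term[OF m KA]
    by (simp add: B mult.assoc[symmetric] PQ i2_zero)
qed

lemma coprod_bracket_root:
  assumes Du: "D u = i1 (K (wneg a)) * i2 u + i1 u + R"
    and a: "a \<in> QD n" and m: "m \<in> {1..n+1}" and u: "homog u a"
    and adj: "inner n a (alpha m) = -1"
  shows "D (bra u (E m)) = i1 (K (wneg (wadd a (alpha m)))) * i2 (bra u (E m)) + i1 (bra u (E m))
     + sc (qhat q) * (i1 (E m * K (wneg a)) * i2 u) + brc R (D (E m))"
proof -
  have am: "alpha m \<in> QD n" using QD_alpha[OF _ m] n3 by simp
  have KK: "K (wneg (alpha m)) * K (wneg a) = sa (q powi 0) * (K (wneg a) * K (wneg (alpha m)))"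
    using K_mult[OF QD_wneg[OF am] QD_wneg[OF a]] K_mult[OF QD_wneg[OF a] QD_wneg[OF am]]
    by (simp add: sa_one wadd_comm)
  have K_sum: "K (wneg a) * K (wneg (alpha m)) = K (wneg (wadd a (alpha m)))"
    using K_mult[OF QD_wneg[OF a] QD_wneg[OF am]] by (simp add: wadd_wneg)
  have KaE: "K (wneg a) * E m = Q * (E m * K (wneg a))"
    using K_E[OF QD_wneg[OF a] m] adj by (simp add: inner_wneg_l)
  have Ku: "K (wneg (alpha m)) * u = sa (q powi 1) * (u * K (wneg (alpha m)))"
    using homog_K_comm[OF u QD_wneg[OF am]] adj inner_sym[of n "alpha m" a]
    by (simp add: inner_wneg_l)
  have first: "brc (i1 (K (wneg a)) * i2 u) (D (E m))
      = i1 (K (wneg (wadd a (alpha m)))) * i2 (bra u (E m)) + sc (qhat q) * (i1 (E m * K (wneg a)) * i2 u)"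
    unfolding bracket_term[OF m KK] K_sum
    by (simp add: br_def KaE sa_one left_diff_distrib[symmetric] sa_diff[symmetric]
        qhat_def i1_mult i1_sa mult.assoc)
  have second: "brc (i1 u * i2 1) (D (E m)) = i1 (bra u (E m))"
    unfolding bracket_term[OF m Ku] by (simp add: PQ i2_zero i2_one)
  show ?thesis
    using first second unfolding D_bra Du brc_add by (simp add: i2_one)
qed

section \<open>q-commutator identities\<close>

lemma bra_comm: "c * u = u * c \<Longrightarrow> c * v = v * c \<Longrightarrow> c * bra u v = bra u v * c"
  unfolding br_def by (simp add: algebra_simps) (metis mult.assoc sa_central)

lemma bra_times_K: "Kd * e = sa c * (e * Kd) \<Longrightarrow> bra (C * Kd) e = (sa c * (C * e) - P * (e * C)) * Kd"
  unfolding br_def by (simp add: algebra_simps) (metis mult.assoc sa_central)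

text \<open>The q-Serre expression (q + q^-1) b a b - a b b - b b a of a pair (a, b); its vanishing
  is the q-Serre relation between a and b.\<close>
definition serre_expr :: "'a \<Rightarrow> 'a \<Rightarrow> 'a" where
  "serre_expr a b = Q * (b * (a * b)) + P * (b * (a * b)) - a * (b * b) - b * (b * a)"

lemma serre_expr_right: "bra a b * b - Q * (b * bra a b) = - serre_expr a b"
  unfolding serre_expr_def br_def by (simp add: algebra_simps sa_pull[of b] P_Q_cancel)

lemma serre_expr_left: "b * bra b a - Q * bra b a * b = - serre_expr a b"
  unfolding serre_expr_def br_def by (simp add: algebra_simps sa_pull[of b] P_Q_cancel)

lemma serre_expr_E:
  "a \<in> {1..n+1} \<Longrightarrow> b \<in> {1..n+1} \<Longrightarrow> inner n (alpha b) (alpha a) = -1 \<Longrightarrow> serre_expr (E a) (E b) = 0"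
  using E_serre[of b a] serre_expr_left[of "E b" "E a"] by simp

lemma serre_bra_qcomm: "serre_expr a b = 0 \<Longrightarrow> bra a b * b = Q * (b * bra a b)"
  using serre_expr_right[of a b] by simp

lemma serre_commutator_identity:
  "(Q + P) * (bra (bra v b) c * b - b * bra (bra v b) c) =
    v * serre_expr c b + P * (P * (c * serre_expr v b)) - serre_expr v b * c
    - P * (P * (serre_expr c b * v)) + (v * c - c * v) * (b * b)
    + P * (P * (b * (b * (v * c - c * v)))) - b * ((v * c - c * v) * b)
    - P * (P * (b * ((v * c - c * v) * b)))"
  unfolding serre_expr_def br_def
  by (simp add: algebra_simps sa_pull[of b] sa_pull[of c] sa_pull[of v] P_Q_cancel)

text \<open>q + q^-1 is invertible since q is not a 4th root of unity.\<close>
lemma q_plus_inv_invertible: "sa (inverse (q + inverse q)) * (Q + P) = 1"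
proof -
  have "q + inverse q \<noteq> 0"
  proof
    assume "q + inverse q = 0"
    then have "q * q = -1" using q0 by (simp add: field_simps) (metis add_eq_0_iff mult.commute)
    then have "q ^ 4 = 1" by (simp add: power4_eq_xxxx)
    then show False using q_not_root by auto
  qed
  then show ?thesis by (simp flip: sa_mult sa_add add: sa_one)
qed

lemma bra_bra_comm:
  assumes "v * c = c * v" "serre_expr v b = 0" "serre_expr c b = 0"
  shows "bra (bra v b) c * b = b * bra (bra v b) c"
proof -
  have "(Q + P) * (bra (bra v b) c * b - b * bra (bra v b) c) = 0"
    unfolding serre_commutator_identity using assms by simp
  then have "sa (inverse (q + inverse q)) * (Q + P) * (bra (bra v b) c * b - b * bra (bra v b) c) = 0"
    by (simp add: mult.assoc)
  then show ?thesis unfolding q_plus_inv_invertible by simp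
qed

lemma serre_expr_bra: "u * b = b * u \<Longrightarrow> serre_expr (bra u a) b = u * serre_expr a b - P * (serre_expr a b * u)"
proof -
  assume h: "u * b = b * u"
  have h2: "b * (u * z) = u * (b * z)" for z by (metis h mult.assoc)
  show ?thesis unfolding serre_expr_def br_def
    by (simp add: algebra_simps sa_pull[of b] sa_pull[of a] sa_pull[of u] P_Q_cancel h[symmetric] h2)
qed

section \<open>The root vectors and their companions\<close>

abbreviation "x j \<equiv> xv sa q E n j"
abbreviation "y j \<equiv> yv sa q E n j"
abbreviation "Ed r s \<equiv> Edown sa q E r s"
abbreviation "Eu s r \<equiv> Eup sa q E s r"
abbreviation "ep i j \<equiv> eps sa q E T i j"

lemma x_top: "x n = E (n + 1)"
  by (simp add: xv_def)

lemma x_step: "i < n \<Longrightarrow> x i = bra (x (Suc i)) (E (Suc i))"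
proof -
  assume "i < n"
  then have "n - i = Suc (n - Suc i)" "n - (n - Suc i) = Suc i" by auto
  then show ?thesis by (simp add: xv_def)
qed

lemma y_step: "1 \<le> i \<Longrightarrow> y (Suc i) = bra (y i) (E (Suc i))"
  by (cases i) auto

lemma Ed_diag: "Ed r r = E r"
  by (simp add: Edown_def)

lemma Ed_step: "s < r \<Longrightarrow> Ed r s = bra (Ed r (Suc s)) (E s)"
proof -
  assume "s < r"
  then have "r - s = Suc (r - Suc s)" "r - Suc (r - Suc s) = s" by auto
  then show ?thesis by (simp add: Edown_def)
qed

lemma Eu_diag: "Eu s s = E s"
  by (simp add: Eup_def)

lemma Eu_step: "s \<le> r \<Longrightarrow> Eu s (Suc r) = bra (Eu s r) (E (Suc r))"
proof -
  assume "s \<le> r"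
  then have "Suc r - s = Suc (r - s)" "s + Suc (r - s) = Suc r" by auto
  then show ?thesis by (simp add: Eup_def)
qed

lemma T_Ed: "3 \<le> s \<Longrightarrow> s \<le> j \<Longrightarrow> j \<le> n \<Longrightarrow> T (Suc j) (Ed j s) = Ed (Suc j) s"
proof (induction "j - s" arbitrary: s)
  case 0
  then have sj: "s = j" by simp
  have "T (Suc j) (E j) = bra (E (Suc j)) (E j)"
    using 0 sj by (intro T_E_adj) (auto simp: inner_simps alpha_def)
  then show ?case using sj Ed_step[of j "Suc j"] by (simp add: Ed_diag)
next
  case (Suc d)
  then have s: "s < j" by simp
  have IH: "T (Suc j) (Ed j (Suc s)) = Ed (Suc j) (Suc s)"
    using Suc.hyps(1)[of "Suc s"] Suc.hyps(2) Suc.prems s by simp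
  have TE: "T (Suc j) (E s) = E s"
    using Suc.prems s by (intro T_E_orth) (auto simp: inner_simps alpha_def)
  have "T (Suc j) (Ed j s) = bra (Ed (Suc j) (Suc s)) (E s)"
    using Ed_step[OF s] T_bra[of "Suc j"] IH TE Suc.prems by simp
  then show ?case using Ed_step[of s "Suc j"] s by simp
qed

lemma T_chain_E1: "3 \<le> j \<Longrightarrow> j \<le> n \<Longrightarrow> Tch T j (E 1) = bra (Ed j 3) (E 1)"
proof (induction j rule: nat_induct_at_least)
  case base
  have T2: "T 2 (E 1) = E 1" using n3 by (intro T_E_orth) (auto simp: inner_simps alpha_def)
  have T3: "T 3 (E 1) = bra (E 3) (E 1)" using n3 by (intro T_E_adj) (auto simp: inner_simps alpha_def)
  show ?case using T2 T3 by (simp add: numeral_eq_Suc Ed_diag)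
next
  case (Suc j)
  then obtain m where jm: "j = Suc m" by (cases j) auto
  have "Tch T (Suc j) (E 1) = T (Suc j) (Tch T j (E 1))" using jm by simp
  also have "\<dots> = bra (T (Suc j) (Ed j 3)) (T (Suc j) (E 1))" using Suc T_bra[of "Suc j"] by simp
  also have "T (Suc j) (E 1) = E 1" using Suc by (intro T_E_orth) (auto simp: inner_simps alpha_def)
  also have "T (Suc j) (Ed j 3) = Ed (Suc j) 3" using Suc by (intro T_Ed) auto
  finally show ?case .
qed

lemma ep_one_one: "ep 1 1 = 0"
  by simp

lemma ep_one_two: "ep 1 2 = E 1"
proof -
  have "T 2 (E 1) = E 1" using n3 by (intro T_E_orth) (auto simp: inner_simps alpha_def)
  then show ?thesis by (simp add: numeral_eq_Suc)
qed

lemma ep_one_far: "3 \<le> j \<Longrightarrow> j \<le> n \<Longrightarrow> ep 1 j = bra (Ed j 3) (E 1)"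
  using T_chain_E1 by simp

lemma ep_diag: "1 \<le> i \<Longrightarrow> ep (Suc i) (Suc i) = Q * ep i (Suc i) * E (Suc i) - P * (E (Suc i) * ep i (Suc i))"
  by (cases i) auto
lemma ep_sub: "1 \<le> i \<Longrightarrow> ep (Suc i) i = ep i (Suc i) + P * (ep i i * E (Suc i) - E (Suc i) * ep i i)"
  by (cases i) auto
lemma ep_gen: "1 \<le> i \<Longrightarrow> j \<noteq> Suc i \<Longrightarrow> j \<noteq> i \<Longrightarrow> ep (Suc i) j = bra (ep i j) (E (Suc i))"
  by (cases i) auto

lemma homog_x: assumes "1 \<le> i" "i \<le> n" shows "homog (x i) (degx n i)"
  using assms(2)
proof (induction rule: inc_induct)
  case base
  show ?case using homog_E[of "n+1"] n3 by (simp add: x_top alpha_top)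
next
  case (step k)
  then have "homog (bra (x (Suc k)) (E (Suc k))) (wadd (degx n (Suc k)) (alpha (Suc k)))"
    by (intro homog_bra homog_E) auto
  then show ?case using x_step[OF step(2)] degx_step[of k n] assms(1) step(1) by simp
qed

lemma homog_y: "1 \<le> i \<Longrightarrow> i \<le> n \<Longrightarrow> homog (y i) (degy n i)"
proof (induction i rule: nat_induct_at_least)
  case base
  have "homog (bra (x 2) (E 1)) (wadd (degx n 2) (alpha 1))"
    using n3 by (intro homog_bra homog_x homog_E) auto
  then show ?case unfolding degy_one by simp
next
  case (Suc i)
  then have "homog (bra (y i) (E (Suc i))) (wadd (degy n i) (alpha (Suc i)))"
    by (intro homog_bra homog_E) auto
  then show ?case using y_step[OF Suc(1)] degy_step[OF Suc(1)] by simp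
qed

lemma homog_Ed: "2 \<le> s \<Longrightarrow> s \<le> r \<Longrightarrow> r \<le> n + 1 \<Longrightarrow> homog (Ed r s) (wadd (unitv r) (wneg (unitv (s - 1))))"
proof (induction "r - s" arbitrary: s)
  case 0
  then show ?case using homog_E[of r] by (simp add: Ed_diag alpha_def)
next
  case (Suc d)
  then have s: "s < r" "d = r - Suc s" by auto
  then have "homog (Ed r (Suc s)) (wadd (unitv r) (wneg (unitv s)))"
    using Suc.hyps(1)[of "Suc s"] Suc.prems by auto
  then have "homog (bra (Ed r (Suc s)) (E s)) (wadd (wadd (unitv r) (wneg (unitv s))) (alpha s))"
    using Suc s by (intro homog_bra homog_E) auto
  moreover have "wadd (wadd (unitv r) (wneg (unitv s))) (alpha s) = wadd (unitv r) (wneg (unitv (s - 1)))"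
    using Suc s by (auto simp: fun_eq_iff alpha_def wadd_def wneg_def unitv_def)
  ultimately show ?case using Ed_step[OF s(1)] by simp
qed

lemma homog_Eu: "s \<le> r \<Longrightarrow> 2 \<le> s \<Longrightarrow> r \<le> n + 1 \<Longrightarrow> homog (Eu s r) (wadd (unitv r) (wneg (unitv (s - 1))))"
proof (induction r rule: nat_induct_at_least)
  case base
  then show ?case using homog_E[of s] by (simp add: Eu_diag alpha_def)
next
  case (Suc r)
  then have "homog (bra (Eu s r) (E (Suc r))) (wadd (wadd (unitv r) (wneg (unitv (s - 1)))) (alpha (Suc r)))"
    by (intro homog_bra homog_E) auto
  moreover have "wadd (wadd (unitv r) (wneg (unitv (s - 1)))) (alpha (Suc r)) = wadd (unitv (Suc r)) (wneg (unitv (s - 1)))"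
    using Suc by (auto simp: fun_eq_iff wadd_def wneg_def unitv_def alpha_def)
  ultimately show ?case using Eu_step[OF Suc(1)] by simp
qed

lemma homog_ep_one: "1 \<le> j \<Longrightarrow> j \<le> n \<Longrightarrow> homog (ep 1 j) (wadd (unitv 1) (unitv j))"
proof -
  assume j: "1 \<le> j" "j \<le> n"
  consider "j = 1" | "j = 2" | "3 \<le> j" using j by linarith
  then show ?thesis
  proof cases
    case 1 then show ?thesis by (simp add: homog_zero)
  next
    case 2 then show ?thesis using homog_E[of 1] ep_one_two by (simp add: alpha_def)
  next
    case 3
    then have "homog (bra (Ed j 3) (E 1)) (wadd (wadd (unitv j) (wneg (unitv (3 - 1)))) (alpha 1))"
      using j by (intro homog_bra homog_Ed homog_E) auto
    moreover have "wadd (wadd (unitv j) (wneg (unitv (3 - 1)))) (alpha 1) = wadd (unitv 1) (unitv j)"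
      using 3 by (auto simp: fun_eq_iff wadd_def wneg_def unitv_def alpha_def)
    ultimately show ?thesis using ep_one_far[OF 3 j(2)] by simp
  qed
qed

lemma homog_ep: "1 \<le> i \<Longrightarrow> i \<le> n \<Longrightarrow> 1 \<le> j \<Longrightarrow> j \<le> n \<Longrightarrow> homog (ep i j) (wadd (unitv i) (unitv j))"
proof (induction i arbitrary: j rule: nat_induct_at_least)
  case base
  then show ?case by (intro homog_ep_one) simp_all
next
  case (Suc i)
  have IH: "\<And>j. 1 \<le> j \<Longrightarrow> j \<le> n \<Longrightarrow> homog (ep i j) (wadd (unitv i) (unitv j))" using Suc by simp
  define \<beta> where "\<beta> = wadd (unitv (Suc i)) (wneg (unitv i))"
  have Eh: "homog (E (Suc i)) \<beta>" using homog_E[of "Suc i"] Suc by (simp add: alpha_def \<beta>_def)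
  have shift: "\<And>k. wadd (wadd (unitv i) (unitv k)) \<beta> = wadd (unitv (Suc i)) (unitv k)"
    by (auto simp: fun_eq_iff wadd_def wneg_def unitv_def \<beta>_def)
  have right: "\<And>k. 1 \<le> k \<Longrightarrow> k \<le> n \<Longrightarrow> homog (ep i k * E (Suc i)) (wadd (unitv (Suc i)) (unitv k))"
    using homog_mult[OF IH Eh] shift by simp
  have left: "\<And>k. 1 \<le> k \<Longrightarrow> k \<le> n \<Longrightarrow> homog (E (Suc i) * ep i k) (wadd (unitv (Suc i)) (unitv k))"
    using homog_mult[OF Eh IH] shift by (simp add: wadd_comm)
  consider "j = Suc i" | "j = i" | "j \<noteq> Suc i" "j \<noteq> i" by blast
  then show ?case
  proof cases
    case 1
    then show ?thesis using ep_diag[OF Suc(1)] right[of "Suc i"] left[of "Suc i"] Suc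
      by (simp add: mult.assoc homog_diff homog_scal)
  next
    case 2
    have "homog (ep i (Suc i)) (wadd (unitv (Suc i)) (unitv j))"
      using IH[of "Suc i"] Suc 2 wadd_comm[of "unitv i" "unitv (Suc i)"] by simp
    then show ?thesis using ep_sub[OF Suc(1)] right[of i] left[of i] Suc 2
      by (simp add: homog_add homog_diff homog_scal)
  next
    case 3
    then show ?thesis using ep_gen[OF Suc(1) 3] homog_bra[OF IH Eh] shift Suc by simp
  qed
qed

lemma x_commute:
  assumes "j \<le> n" and c: "\<And>m. j < m \<Longrightarrow> m \<le> n + 1 \<Longrightarrow> c * E m = E m * c"
  shows "c * x j = x j * c"
  using assms(1)
proof (induction rule: inc_induct)
  case base
  show ?case using c[of "n + 1"] assms(1) by (simp add: x_top)
next
  case (step k)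
  then show ?case unfolding x_step[OF step(2)] by (intro bra_comm c) auto
qed

lemma serre_x: "1 \<le> i \<Longrightarrow> i < n \<Longrightarrow> serre_expr (x (Suc i)) (E (Suc i)) = 0"
proof -
  assume i: "1 \<le> i" "i < n"
  show ?thesis
  proof (cases "Suc i = n")
    case True
    have "inner n (alpha n) (alpha (n+1)) = -1" using n3 by (auto simp: inner_simps alpha_def)
    then show ?thesis using True n3 by (simp add: x_top serre_expr_E)
  next
    case False
    then have lt: "Suc i < n" using i by simp
    have cu: "E (Suc i) * x (Suc (Suc i)) = x (Suc (Suc i)) * E (Suc i)"
      using lt i by (intro x_commute E_comm_far) auto
    have "serre_expr (E (Suc (Suc i))) (E (Suc i)) = 0"
      using lt i by (intro serre_expr_E) (auto simp: inner_simps alpha_def)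
    then show ?thesis unfolding x_step[OF lt] serre_expr_bra[OF cu[symmetric]] by simp
  qed
qed

lemma x_qcomm_E: "1 \<le> i \<Longrightarrow> i < n \<Longrightarrow> x i * E (Suc i) = Q * (E (Suc i) * x i)"
  using x_step[of i] serre_bra_qcomm[OF serre_x] by simp

lemma x_comm_E: "1 \<le> j \<Longrightarrow> j < i \<Longrightarrow> i < n \<Longrightarrow> x j * E (Suc i) = E (Suc i) * x j"
proof (induction "i - Suc j" arbitrary: j)
  case 0
  then have ij: "i = Suc j" by simp
  have xj: "x j = bra (bra (x (Suc i)) (E (Suc i))) (E i)"
    using x_step[of j] x_step[of i] 0 ij by simp
  have cu: "E i * x (Suc i) = x (Suc i) * E i"
    using 0 ij by (intro x_commute E_comm_far) auto
  have "serre_expr (E i) (E (Suc i)) = 0"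
    using 0 ij by (intro serre_expr_E) (auto simp: inner_simps alpha_def)
  then show ?case unfolding xj using bra_bra_comm[OF cu[symmetric] serre_x] 0 ij by simp
next
  case (Suc d)
  then have lt: "Suc j < i" by simp
  have "x (Suc j) * E (Suc i) = E (Suc i) * x (Suc j)"
    using Suc.hyps(1)[of "Suc j"] Suc.hyps(2) Suc.prems lt by simp
  moreover have "E (Suc i) * E (Suc j) = E (Suc j) * E (Suc i)"
    using E_comm_far[of "Suc j" "Suc i"] Suc.prems lt by simp
  ultimately have "E (Suc i) * bra (x (Suc j)) (E (Suc j)) = bra (x (Suc j)) (E (Suc j)) * E (Suc i)"
    by (intro bra_comm) simp_all
  then show ?case using x_step[of j] Suc.prems by simp
qed

lemma y_comm_E: "1 \<le> j \<Longrightarrow> j < i \<Longrightarrow> i < n \<Longrightarrow> y j * E (Suc i) = E (Suc i) * y j"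
proof (induction j rule: nat_induct_at_least)
  case base
  show ?case
  proof (cases "i = 2")
    case True
    have y1: "y 1 = bra (bra (x 3) (E 3)) (E 1)"
      using x_step[of 2] n3 by (simp add: numeral_eq_Suc)
    have cu: "E 1 * x 3 = x 3 * E 1"
      using n3 by (intro x_commute E1_comm) auto
    have sx: "serre_expr (x 3) (E 3) = 0"
      using serre_x[of 2] n3 by (simp add: numeral_eq_Suc)
    have "serre_expr (E 1) (E 3) = 0"
      using n3 by (intro serre_expr_E) (auto simp: inner_simps alpha_def)
    then show ?thesis unfolding y1 using bra_bra_comm[OF cu[symmetric] sx] True
      by (simp add: numeral_eq_Suc)
  next
    case False
    then have "3 \<le> i" using base by simp
    then have "E (Suc i) * bra (x 2) (E 1) = bra (x 2) (E 1) * E (Suc i)"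
      using x_comm_E[of 2 i] E1_comm[of "Suc i"] base by (intro bra_comm) simp_all
    then show ?thesis by simp
  qed
next
  case (Suc j)
  have "E (Suc i) * bra (y j) (E (Suc j)) = bra (y j) (E (Suc j)) * E (Suc i)"
    using Suc E_comm_far[of "Suc j" "Suc i"] by (intro bra_comm) simp_all
  then show ?case using y_step[OF Suc(1)] by simp
qed

section \<open>The coproduct formulas\<close>

definition tail_x :: "nat \<Rightarrow> 'c" where
  "tail_x i = (\<Sum>j\<in>{i+1..n}. i1 (Ed j (i+1) * K (wneg (degx n j))) * i2 (x j))"

definition eps_part :: "nat \<Rightarrow> 'c" where
  "eps_part i = (\<Sum>j\<in>{1..n}. i1 (ep i j * K (wneg (degx n j))) * i2 (x j))"

definition tail_y :: "nat \<Rightarrow> 'c" where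
  "tail_y i = (\<Sum>j\<in>{1..i-1}. i1 (Eu (j+1) i * K (wneg (degy n j))) * i2 (y j))"

lemma bracket_tail_x:
  assumes k: "1 \<le> k" "k < n"
  shows "brc (sc (qhat q) * tail_x (Suc k)) (D (E (Suc k)))
    = sc (qhat q) * (\<Sum>j\<in>{Suc k + 1..n}. i1 (Ed j (Suc k) * K (wneg (degx n j))) * i2 (x j))"
  unfolding tail_x_def brc_scaled_sum
proof (rule arg_cong[where f = "\<lambda>z. sc (qhat q) * z"], rule sum.cong[OF refl])
  fix j assume j: "j \<in> {Suc k + 1..n}"
  have m: "Suc k \<in> {1..n+1}" using k by simp
  have C: "homog (Ed j (Suc (Suc k))) (wadd (unitv j) (wneg (unitv (Suc k))))"
    using homog_Ed[of "Suc (Suc k)" j] j by simp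
  have B: "x j * E (Suc k) = E (Suc k) * x j"
    using j k by (intro x_commute[symmetric] E_comm_far) auto
  have "brc (i1 (Ed j (Suc (Suc k)) * K (wneg (degx n j))) * i2 (x j)) (D (E (Suc k)))
      = i1 (bra (Ed j (Suc (Suc k))) (E (Suc k)) * K (wneg (degx n j))) * i2 (x j)"
    using j k by (intro bracket_term_commuting[OF m C] B QD_wneg QD_degx)
      (auto simp: inner_simps alpha_def degx_def)
  then show "brc (i1 (Ed j (Suc k + 1) * K (wneg (degx n j))) * i2 (x j)) (D (E (Suc k)))
      = i1 (Ed j (Suc k) * K (wneg (degx n j))) * i2 (x j)"
    using Ed_step[of "Suc k" j] j by simp
qed

lemma coprod_x:
  assumes "1 \<le> i" "i \<le> n"
  shows "D (x i) = i1 (K (wneg (degx n i))) * i2 (x i) + i1 (x i) + sc (qhat q) * tail_x i"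
  using assms(2)
proof (induction rule: inc_induct)
  case base
  show ?case using D_E[of "n+1"] n3 by (simp add: x_top alpha_top tail_x_def)
next
  case (step k)
  have k: "1 \<le> k" "k < n" using assms(1) step by auto
  have m: "Suc k \<in> {1..n+1}" using k by simp
  have a: "degx n (Suc k) \<in> QD n" using k by (intro QD_degx) simp
  have u: "homog (x (Suc k)) (degx n (Suc k))" using k by (intro homog_x) simp_all
  have adj: "inner n (degx n (Suc k)) (alpha (Suc k)) = -1"
    using k by (simp add: inner_simps degx_def alpha_def)
  have "D (x k) = i1 (K (wneg (degx n k))) * i2 (x k) + i1 (x k)
      + sc (qhat q) * (i1 (E (Suc k) * K (wneg (degx n (Suc k)))) * i2 (x (Suc k)))
      + sc (qhat q) * (\<Sum>j\<in>{Suc k + 1..n}. i1 (Ed j (Suc k) * K (wneg (degx n j))) * i2 (x j))"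
    using coprod_bracket_root[OF step.IH a m u adj] x_step[OF k(2)] degx_step[OF k(1)]
      bracket_tail_x[OF k] by simp
  also have "\<dots> = i1 (K (wneg (degx n k))) * i2 (x k) + i1 (x k) + sc (qhat q) * tail_x k"
    using k by (simp add: tail_x_def sum.atLeast_Suc_atMost Ed_diag distrib_left add.assoc)
  finally show ?case .
qed

lemma bracket_tail_x_E1:
  "brc (sc (qhat q) * tail_x 2) (D (E 1))
    = sc (qhat q) * (\<Sum>j\<in>{3..n}. i1 (ep 1 j * K (wneg (degx n j))) * i2 (x j))"
  unfolding tail_x_def brc_scaled_sum
proof (rule arg_cong[where f = "\<lambda>z. sc (qhat q) * z"], rule sum.cong)
  show "{2+1..n} = {3..n}" by simp
  fix j assume j: "j \<in> {3..n}"
  have m: "1 \<in> {1..n+1}" by simp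
  have C: "homog (Ed j 3) (wadd (unitv j) (wneg (unitv 2)))"
    using homog_Ed[of 3 j] j by simp
  have B: "x j * E 1 = E 1 * x j"
    using j by (intro x_commute[symmetric] E1_comm) auto
  have "brc (i1 (Ed j 3 * K (wneg (degx n j))) * i2 (x j)) (D (E 1))
      = i1 (bra (Ed j 3) (E 1) * K (wneg (degx n j))) * i2 (x j)"
    using j by (intro bracket_term_commuting[OF m C] B QD_wneg QD_degx)
      (auto simp: inner_simps alpha_def degx_def)
  then show "brc (i1 (Ed j (2 + 1) * K (wneg (degx n j))) * i2 (x j)) (D (E 1))
      = i1 (ep 1 j * K (wneg (degx n j))) * i2 (x j)"
    using ep_one_far[of j] j by (simp add: numeral_eq_Suc del: eps.simps)
qed

lemma eps_part_one:
  "eps_part 1 = i1 (E 1 * K (wneg (degx n 2))) * i2 (x 2)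
     + (\<Sum>j\<in>{3..n}. i1 (ep 1 j * K (wneg (degx n j))) * i2 (x j))"
proof -
  define f where "f j = i1 (ep 1 j * K (wneg (degx n j))) * i2 (x j)" for j
  have "eps_part 1 = f 1 + (f 2 + (\<Sum>j\<in>{3..n}. f j))"
    using n3 sum.atLeast_Suc_atMost[of 1 n f] sum.atLeast_Suc_atMost[of 2 n f]
    by (simp add: eps_part_def f_def numeral_eq_Suc del: eps.simps)
  then show ?thesis
    by (simp add: f_def ep_one_one[unfolded One_nat_def] ep_one_two[unfolded One_nat_def] i1_zero
        del: eps.simps)
qed

lemma coprod_y_one:
  "D (y 1) = i1 (K (wneg (degy n 1))) * i2 (y 1) + i1 (y 1) + sc (qhat q) * (eps_part 1 + tail_y 1)"
proof -
  have m: "1 \<in> {1..n+1}" by simp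
  have a: "degx n 2 \<in> QD n" using n3 by (intro QD_degx) simp
  have u: "homog (x 2) (degx n 2)" using n3 by (intro homog_x) simp_all
  have adj: "inner n (degx n 2) (alpha 1) = -1" using n3 by (simp add: inner_simps degx_def alpha_def)
  have y1: "y 1 = bra (x 2) (E 1)" by simp
  have "D (y 1) = i1 (K (wneg (degy n 1))) * i2 (y 1) + i1 (y 1)
      + sc (qhat q) * (i1 (E 1 * K (wneg (degx n 2))) * i2 (x 2)) + brc (sc (qhat q) * tail_x 2) (D (E 1))"
    unfolding y1 degy_one[symmetric] using coprod_bracket_root[OF coprod_x[of 2] a m u adj] n3 by simp
  then show ?thesis using n3 unfolding bracket_tail_x_E1 eps_part_one
    by (simp add: tail_y_def distrib_left add.assoc del: eps.simps)
qed

lemma bracket_tail_y: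
  assumes i: "1 \<le> i" "i < n"
  shows "brc (sc (qhat q) * tail_y i) (D (E (Suc i)))
    = sc (qhat q) * (\<Sum>j\<in>{1..i-1}. i1 (Eu (j+1) (Suc i) * K (wneg (degy n j))) * i2 (y j))"
  unfolding tail_y_def brc_scaled_sum
proof (rule arg_cong[where f = "\<lambda>z. sc (qhat q) * z"], rule sum.cong[OF refl])
  fix j assume j: "j \<in> {1..i-1}"
  have m: "Suc i \<in> {1..n+1}" using i by simp
  have ji: "j + 1 \<le> i" using j i by auto
  have C: "homog (Eu (j+1) i) (wadd (unitv i) (wneg (unitv j)))"
    using homog_Eu[OF ji] j i by simp
  have B: "y j * E (Suc i) = E (Suc i) * y j"
    using j i by (intro y_comm_E) auto
  have "brc (i1 (Eu (j+1) i * K (wneg (degy n j))) * i2 (y j)) (D (E (Suc i)))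
      = i1 (bra (Eu (j+1) i) (E (Suc i)) * K (wneg (degy n j))) * i2 (y j)"
    using j i by (intro bracket_term_commuting[OF m C] B QD_wneg QD_degy)
      (auto simp: inner_simps alpha_def degy_def)
  then show "brc (i1 (Eu (j+1) i * K (wneg (degy n j))) * i2 (y j)) (D (E (Suc i)))
      = i1 (Eu (j+1) (Suc i) * K (wneg (degy n j))) * i2 (y j)"
    using Eu_step[OF ji] by simp
qed

lemma K_alpha_ep:
  assumes "1 \<le> i" "i < n" "1 \<le> j" "j \<le> n"
  shows "K (wneg (alpha (Suc i))) * (ep i j * K (wneg (degx n j)))
    = sa (q powi inner n (wneg (alpha (Suc i))) (wadd (unitv i) (unitv j)))
      * (ep i j * K (wneg (degx n j)) * K (wneg (alpha (Suc i))))"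
  using assms n3 by (intro homog_K_comm[OF homog_times_K[OF homog_ep]] QD_wneg QD_alpha QD_degx) auto

text \<open>The two non-generic terms j = i, i+1 of the epsilon-sum.  Neither bracket is of the
  simple form of bracket_term_commuting, but their sum is (bracket_eps_exceptional).\<close>
lemma bracket_eps_diag_term:
  assumes i: "1 \<le> i" "i < n"
  shows "brc (i1 (ep i i * K (wneg (degx n i))) * i2 (x i)) (D (E (Suc i)))
    = i1 ((P * (ep i i * E (Suc i)) - P * (E (Suc i) * ep i i)) * K (wneg (degx n i))) * i2 (x i)"
proof -
  have m: "Suc i \<in> {1..n+1}" using i by simp
  have KA: "K (wneg (alpha (Suc i))) * (ep i i * K (wneg (degx n i)))
      = sa (q powi 2) * (ep i i * K (wneg (degx n i)) * K (wneg (alpha (Suc i))))"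
    using K_alpha_ep[of i i] i by (simp add: inner_simps alpha_def)
  have KE: "K (wneg (degx n i)) * E (Suc i) = sa (q powi (-1)) * (E (Suc i) * K (wneg (degx n i)))"
    using K_E[OF QD_wneg[OF QD_degx] m] i by (simp add: inner_simps degx_def alpha_def)
  have "P * sa (q powi 2) = Q"
    using q0 by (simp flip: sa_mult add: power2_eq_square mult.assoc[symmetric])
  then show ?thesis
    unfolding bracket_term[OF m KA] bra_times_K[OF KE]
    using x_qcomm_E[OF i] by (simp add: i2_zero)
qed

lemma bracket_eps_next_term:
  assumes i: "1 \<le> i" "i < n"
  shows "brc (i1 (ep i (Suc i) * K (wneg (degx n (Suc i)))) * i2 (x (Suc i))) (D (E (Suc i)))
    = i1 (ep i (Suc i) * K (wneg (degx n i))) * i2 (x i)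
      + i1 (ep (Suc i) (Suc i) * K (wneg (degx n (Suc i)))) * i2 (x (Suc i))"
proof -
  have m: "Suc i \<in> {1..n+1}" using i by simp
  have dsi: "wneg (degx n (Suc i)) \<in> QD n" using i by (intro QD_wneg QD_degx) simp
  have KA: "K (wneg (alpha (Suc i))) * (ep i (Suc i) * K (wneg (degx n (Suc i))))
      = sa (q powi 0) * (ep i (Suc i) * K (wneg (degx n (Suc i))) * K (wneg (alpha (Suc i))))"
    using K_alpha_ep[of i "Suc i"] i by (simp add: inner_simps alpha_def)
  have KE: "K (wneg (degx n (Suc i))) * E (Suc i) = sa (q powi 1) * (E (Suc i) * K (wneg (degx n (Suc i))))"
    using K_E[OF dsi m] i by (simp add: inner_simps degx_def alpha_def)
  have KK: "K (wneg (degx n (Suc i))) * K (wneg (alpha (Suc i))) = K (wneg (degx n i))"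
    using K_mult[OF dsi QD_wneg[OF QD_alpha[OF _ m]]] degx_step[OF i(1)] n3 by (simp add: wadd_wneg)
  have "x (Suc i) * E (Suc i) - P * sa (q powi 0) * (E (Suc i) * x (Suc i)) = x i"
    using x_step[OF i(2)] by (simp add: br_def sa_one)
  then show ?thesis
    unfolding bracket_term[OF m KA] bra_times_K[OF KE]
    using ep_diag[OF i(1)] KK by (simp add: mult.assoc)
qed

lemma bracket_eps_exceptional:
  assumes i: "1 \<le> i" "i < n"
  shows "brc (i1 (ep i i * K (wneg (degx n i))) * i2 (x i)) (D (E (Suc i)))
       + brc (i1 (ep i (Suc i) * K (wneg (degx n (Suc i)))) * i2 (x (Suc i))) (D (E (Suc i)))
     = i1 (ep (Suc i) i * K (wneg (degx n i))) * i2 (x i)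
       + i1 (ep (Suc i) (Suc i) * K (wneg (degx n (Suc i)))) * i2 (x (Suc i))"
  unfolding bracket_eps_diag_term[OF i] bracket_eps_next_term[OF i] ep_sub[OF i(1)]
  by (simp add: distrib_right right_diff_distrib i1_add add.assoc)

lemma bracket_eps_part:
  assumes i: "1 \<le> i" "i < n"
  shows "brc (sc (qhat q) * eps_part i) (D (E (Suc i))) = sc (qhat q) * eps_part (Suc i)"
  unfolding eps_part_def brc_scaled_sum
proof (rule arg_cong[where f = "\<lambda>z. sc (qhat q) * z"],
    rule sum_cong_except_pair[where a = i and b = "Suc i"])
  fix j assume j: "j \<in> {1..n}" "j \<noteq> i" "j \<noteq> Suc i"
  have m: "Suc i \<in> {1..n+1}" using i by simp
  have C: "homog (ep i j) (wadd (unitv i) (unitv j))" using i j by (intro homog_ep) auto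
  have B: "x j * E (Suc i) = E (Suc i) * x j"
  proof (cases "j < i")
    case True then show ?thesis using x_comm_E[of j i] i j by simp
  next
    case False
    then show ?thesis using j i by (intro x_commute[symmetric] E_comm_far) auto
  qed
  have "brc (i1 (ep i j * K (wneg (degx n j))) * i2 (x j)) (D (E (Suc i)))
      = i1 (bra (ep i j) (E (Suc i)) * K (wneg (degx n j))) * i2 (x j)"
    using i j by (intro bracket_term_commuting[OF m C] B QD_wneg QD_degx)
      (auto simp: inner_simps alpha_def degx_def)
  then show "brc (i1 (ep i j * K (wneg (degx n j))) * i2 (x j)) (D (E (Suc i)))
      = i1 (ep (Suc i) j * K (wneg (degx n j))) * i2 (x j)"
    using ep_gen[OF i(1) j(3) j(2)] by simp
qed (use i bracket_eps_exceptional[OF i] in auto)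

lemma tail_y_Suc: "1 \<le> i \<Longrightarrow> tail_y (Suc i)
    = (\<Sum>j\<in>{1..i-1}. i1 (Eu (j+1) (Suc i) * K (wneg (degy n j))) * i2 (y j))
      + i1 (E (Suc i) * K (wneg (degy n i))) * i2 (y i)"
  by (cases i) (auto simp: tail_y_def Eu_diag)

lemma coprod_y:
  "1 \<le> i \<Longrightarrow> i \<le> n \<Longrightarrow>
    D (y i) = i1 (K (wneg (degy n i))) * i2 (y i) + i1 (y i) + sc (qhat q) * (eps_part i + tail_y i)"
proof (induction i rule: nat_induct_at_least)
  case base
  show ?case by (rule coprod_y_one)
next
  case (Suc i)
  have i: "1 \<le> i" "i < n" using Suc by auto
  have m: "Suc i \<in> {1..n+1}" using i by simp
  have a: "degy n i \<in> QD n" using i by (intro QD_degy) simp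
  have u: "homog (y i) (degy n i)" using i by (intro homog_y) simp_all
  have adj: "inner n (degy n i) (alpha (Suc i)) = -1"
    using i by (simp add: inner_simps degy_def alpha_def)
  have Dy: "D (y i) = i1 (K (wneg (degy n i))) * i2 (y i) + i1 (y i)
      + (sc (qhat q) * eps_part i + sc (qhat q) * tail_y i)"
    using Suc i by (simp add: distrib_left)
  show ?case
    using coprod_bracket_root[OF Dy a m u adj] y_step[OF i(1)] degy_step[OF i(1)]
      bracket_eps_part[OF i] bracket_tail_y[OF i] tail_y_Suc[OF i(1)]
    by (simp add: brc_add distrib_left add.assoc)
qed

end

theorem lemma3p3:
  fixes n :: nat and q :: "'k::field_char_0"
    and sa :: "'k \<Rightarrow> 'a::ring_1" and E F :: "nat \<Rightarrow> 'a" and K :: "wt \<Rightarrow> 'a"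
    and T :: "nat \<Rightarrow> 'a \<Rightarrow> 'a"
    and sc :: "'k \<Rightarrow> 'c::ring_1" and i1 i2 \<Delta> :: "'a \<Rightarrow> 'c"
    and i :: nat
  assumes "alg_closed TYPE('k)"
    and "q \<noteq> 0" and "\<forall>m::nat. m > 0 \<longrightarrow> q ^ m \<noteq> 1"
    and "n \<ge> 3"
    and "kalg sa" and "kalg sc"
    and "Uq_rels n q sa E F K"
    and "lusztig n q sa E F K T"
    and "tensor_data sa sc i1 i2"
    and "coprod n sa sc E K i1 i2 \<Delta>"
    and "i \<in> {1..n}"
  shows "\<Delta> (xv sa q E n i) =
           tens i1 i2 (K (wneg (degx n i))) (xv sa q E n i) + tens i1 i2 (xv sa q E n i) 1
           + sc (qhat q) * (\<Sum>j\<in>{i+1..n}.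
                tens i1 i2 (Edown sa q E j (i+1) * K (wneg (degx n j))) (xv sa q E n j))
       \<and> \<Delta> (yv sa q E n i) =
           tens i1 i2 (K (wneg (degy n i))) (yv sa q E n i) + tens i1 i2 (yv sa q E n i) 1
           + sc (qhat q) * ((\<Sum>j\<in>{1..n}.
                tens i1 i2 (eps sa q E T i j * K (wneg (degx n j))) (xv sa q E n j))
              + (\<Sum>j\<in>{1..i-1}.
                tens i1 i2 (Eup sa q E (j+1) i * K (wneg (degy n j))) (yv sa q E n j)))"
proof -
  interpret Uq_coproduct n q sa E F K T sc i1 i2 \<Delta>
    using assms by unfold_locales auto
  have i: "1 \<le> i" "i \<le> n" using assms by auto
  show ?thesis
    using coprod_x[OF i] coprod_y[OF i]
    unfolding tens_def tail_x_def eps_part_def tail_y_def by (simp add: i2_one)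
qed

end
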